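(* Let $D, n \ge 1$, let $t_1, \dots, t_D$ be equally spaced real numbers, and let $\theta = (\theta_1, \theta_2, \theta_3) \in \mathbb{R}^3$ with $l = e^{\theta_1}$, $a^2 = e^{2\theta_2}$, $\sigma^2 = e^{2\theta_3}$. Let $A$ be the $D \times D$ matrix $A_{rs} = a^2 \exp\left(-(t_r - t_s)^2 / l\right)$, let $S$ be the $D\times D$ matrix $S_{rs} = (t_r - t_s)^2 / l$, let $J_n$ be the $n\times n$ all-ones matrix, and let $\hat{C} = \sigma^2 I_{nD} + J_n \otimes A$. Let $Z = (I_D + \sigma^{-2} n A)^{-1}$. For a data vector $X(\tau) \in \mathbb{R}^{nD}$ define $$\log p(X \mid \tau, \theta) = -\tfrac{1}{2} X(\tau)^T \hat{C}^{-1} X(\tau) - \tfrac{1}{2}\log\det \hat{C} - \tfrac{nD}{2}\log 2\pi .$$ Then $$\frac{\partial}{\partial\theta_1}\log p(X \mid \tau, \theta) = \frac{1}{2} X(\tau)^T \left(\sigma^{-4} J_n \otimes \big(Z (A\odot S) Z\big)\right) X(\tau) - \frac{1}{2}\operatorname{tr}\!\left(\hat{C}^{-1} \frac{\partial \hat{C}}{\partial \theta_1}\right),$$ where $$\operatorname{tr}\!\left(\hat{C}^{-1} \frac{\partial \hat{C}}{\partial \theta_1}\right) = \sigma^{-2} n \sum_i (A\odot S)_{ii} - \sigma^{-2} n \sum_{i,j} \left\{(I_D - Z) \odot (A\odot S)\right\}_{ij}.$$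
   Context: $\otimes$ is the Kronecker product and $\odot$ the Hadamard (entrywise) product. $X(\tau)$ is the concatenation $(x_1(t_1),\dots,x_1(t_D),\dots,x_n(t_1),\dots,x_n(t_D))$ of $n$ observation vectors of length $D$. The derivative is taken with $X(\tau)$ and $t_1,\dots,t_D$ fixed, with $A$, $\hat C$, $Z$ depending on $\theta$ through $l, a^2, \sigma^2$ as defined. *)

theory Defs
  imports "HOL-Analysis.Analysis"
begin

definition ell :: "real \<Rightarrow> real" where "ell th1 = exp th1"
definition asq :: "real \<Rightarrow> real" where "asq th2 = exp (2 * th2)"
definition sigsq :: "real \<Rightarrow> real" where "sigsq th3 = exp (2 * th3)"

definition Amat :: "('d::finite \<Rightarrow> real) \<Rightarrow> real \<Rightarrow> real \<Rightarrow> real^'d^'d" where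
  "Amat t th1 th2 = (\<chi> r s. asq th2 * exp (- ((t r - t s)^2 / ell th1)))"

definition Smat :: "('d::finite \<Rightarrow> real) \<Rightarrow> real \<Rightarrow> real^'d^'d" where
  "Smat t th1 = (\<chi> r s. (t r - t s)^2 / ell th1)"

definition Jmat :: "real^'n^'n" where "Jmat = (\<chi> i j. 1)"

text \<open>Kronecker product; the index (i,r) stands for position (i-1)D + r of the concatenation.\<close>
definition kron :: "real^'n^'n \<Rightarrow> real^'d^'d \<Rightarrow> real^('n \<times> 'd)^('n \<times> 'd)" where
  "kron P Q = (\<chi> p q. P $ fst p $ fst q * Q $ snd p $ snd q)"

definition hadamard :: "real^'m^'k \<Rightarrow> real^'m^'k \<Rightarrow> real^'m^'k" where
  "hadamard P Q = (\<chi> i j. P $ i $ j * Q $ i $ j)"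

definition Chat :: "('d::finite \<Rightarrow> real) \<Rightarrow> real \<Rightarrow> real \<Rightarrow> real \<Rightarrow> real^('n::finite \<times> 'd)^('n \<times> 'd)" where
  "Chat t th1 th2 th3 = sigsq th3 *\<^sub>R mat 1 + kron Jmat (Amat t th1 th2)"

definition Zmat :: "nat \<Rightarrow> ('d::finite \<Rightarrow> real) \<Rightarrow> real \<Rightarrow> real \<Rightarrow> real \<Rightarrow> real^'d^'d" where
  "Zmat n t th1 th2 th3 = matrix_inv (mat 1 + (real n / sigsq th3) *\<^sub>R Amat t th1 th2)"

definition logp :: "real^('n::finite \<times> 'd::finite) \<Rightarrow> ('d \<Rightarrow> real) \<Rightarrow> real \<Rightarrow> real \<Rightarrow> real \<Rightarrow> real" where
  "logp X t th1 th2 th3 =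
     - (1/2) * (X \<bullet> (matrix_inv (Chat t th1 th2 th3 :: real^('n \<times> 'd)^('n \<times> 'd)) *v X))
     - (1/2) * ln (det (Chat t th1 th2 th3 :: real^('n \<times> 'd)^('n \<times> 'd)))
     - (real (CARD('n) * CARD('d)) / 2) * ln (2 * pi)"

definition dChat :: "('d::finite \<Rightarrow> real) \<Rightarrow> real \<Rightarrow> real \<Rightarrow> real \<Rightarrow> real^('n::finite \<times> 'd)^('n \<times> 'd)" where
  "dChat t th1 th2 th3 = (\<chi> p q. deriv (\<lambda>x. (Chat t x th2 th3 :: real^('n \<times> 'd)^('n \<times> 'd)) $ p $ q) th1)"

end

theory Submission
  imports Defs
begin

(*
  The log-likelihood is that of a centred Gaussian with covariance C(theta). Jacobi's formula
  and the derivative of the inverse give the generic gradient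
  1/2 X^T C^-1 C' C^-1 X - 1/2 tr(C^-1 C'), here with C' = J_n (x) (A o S).
  Since J_n J_n = n J_n, a Woodbury-type computation gives
  C^-1 = sigma^-2 I - sigma^-4 J_n (x) Z A, hence C^-1 C' = sigma^-2 J_n (x) Z (A o S) and
  C^-1 C' C^-1 = sigma^-4 J_n (x) Z (A o S) Z; the trace formula then follows from the symmetry
  of A o S. All inverses and logarithms make sense because the squared exponential kernel A is
  positive semidefinite (expand exp(2 t_r t_s / l) as a power series), which makes C and
  I + sigma^-2 n A positive definite.
*)

lemma matrix_mul_matrix_inv:
  fixes A :: "'a::semiring_1^'n^'n"
  assumes "invertible A"
  shows "A ** matrix_inv A = mat 1"
  using someI_ex[OF assms[unfolded invertible_def]] unfolding matrix_inv_def by auto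

lemma matrix_inv_matrix_mul:
  fixes A :: "'a::semiring_1^'n^'n"
  assumes "invertible A"
  shows "matrix_inv A ** A = mat 1"
  using someI_ex[OF assms[unfolded invertible_def]] unfolding matrix_inv_def by auto

lemma matrix_inv_unique:
  fixes A B :: "'a::field^'n::finite^'n"
  assumes "A ** B = mat 1"
  shows "matrix_inv A = B"
proof -
  have "B ** A = mat 1" using assms matrix_left_right_inverse by blast
  then have inv: "invertible A" using assms unfolding invertible_def by blast
  have "B = B ** (A ** matrix_inv A)" using matrix_mul_matrix_inv[OF inv] by simp
  also have "\<dots> = matrix_inv A" using \<open>B ** A = mat 1\<close> by (simp add: matrix_mul_assoc)
  finally show ?thesis by simp
qed

lemma matrix_add_rdistrib: "((A::real^'n::finite^'m) + B) ** (C::real^'p^'n) = A ** C + B ** C"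
  by (simp add: vec_eq_iff matrix_matrix_mult_def sum.distrib distrib_right)

lemma matrix_diff_ldistrib: "(A::real^'n::finite^'m) ** ((B::real^'p^'n) - C) = A ** B - A ** C"
  by (simp add: vec_eq_iff matrix_matrix_mult_def sum_subtractf right_diff_distrib)

lemma matrix_diff_rdistrib: "((A::real^'n::finite^'m) - B) ** (C::real^'p^'n) = A ** C - B ** C"
  by (simp add: vec_eq_iff matrix_matrix_mult_def sum_subtractf left_diff_distrib)

lemma matrix_mul_uminus_right: "(A::real^'n::finite^'m) ** (- B) = - (A ** (B::real^'p^'n))"
  by (simp add: vec_eq_iff matrix_matrix_mult_def sum_negf)

lemma uminus_matrix_vector_mult: "(- (M::real^'n::finite^'m)) *v x = - (M *v x)"
  by (simp add: vec_eq_iff matrix_vector_mult_def sum_negf)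

lemma scaleR_matrix_vector_mult: "((c::real) *\<^sub>R (A::real^'n::finite^'m)) *v v = c *\<^sub>R (A *v v)"
  by (simp add: vec_eq_iff matrix_vector_mult_def sum_distrib_left mult.assoc)

lemma trace_mult_symmetric:
  fixes Z B :: "real^'k::finite^'k"
  assumes "\<And>i j. B $ i $ j = B $ j $ i"
  shows "trace (Z ** B) = (\<Sum>i\<in>UNIV. B $ i $ i) - (\<Sum>i\<in>UNIV. \<Sum>j\<in>UNIV. hadamard (mat 1 - Z) B $ i $ j)"
proof -
  have "trace (Z ** B) = (\<Sum>i\<in>UNIV. \<Sum>j\<in>UNIV. Z $ i $ j * B $ i $ j)"
    unfolding trace_def matrix_matrix_mult_def using assms by simp
  moreover have "(\<Sum>i\<in>UNIV. \<Sum>j\<in>UNIV. hadamard (mat 1 - Z) B $ i $ j) =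
      (\<Sum>i\<in>UNIV. \<Sum>j\<in>UNIV. (if i = j then B $ i $ j else 0) - Z $ i $ j * B $ i $ j)"
    by (intro sum.cong refl) (auto simp: hadamard_def mat_def left_diff_distrib)
  ultimately show ?thesis by (simp add: sum_subtractf)
qed

section \<open>Kronecker products with the all-ones matrix\<close>

lemma sum_UNIV_pair: "(\<Sum>k\<in>(UNIV::('a::finite \<times> 'b::finite) set). f k) = (\<Sum>i\<in>UNIV. \<Sum>r\<in>UNIV. f (i, r))"
  by (simp add: sum.cartesian_product UNIV_Times_UNIV[symmetric] del: UNIV_Times_UNIV)

lemma kron_mult:
  fixes P P' :: "real^'n::finite^'n" and Q Q' :: "real^'d::finite^'d"
  shows "kron P Q ** kron P' Q' = kron (P ** P') (Q ** Q')"
  by (simp add: vec_eq_iff matrix_matrix_mult_def kron_def sum_UNIV_pair sum_product mult_ac,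
      subst sum.swap, simp add: mult_ac)

lemma kron_add_right: "kron P (Q + Q') = kron P Q + kron P Q'"
  by (simp add: vec_eq_iff kron_def distrib_left)

lemma kron_diff_right: "kron P (Q - Q') = kron P Q - kron P Q'"
  by (simp add: vec_eq_iff kron_def right_diff_distrib)

lemma kron_scaleR_right: "kron P (c *\<^sub>R Q) = c *\<^sub>R kron P Q"
  by (simp add: vec_eq_iff kron_def)

lemma kron_scaleR_left: "kron (c *\<^sub>R P) Q = c *\<^sub>R kron P Q"
  by (simp add: vec_eq_iff kron_def)

lemma kron_zero_right: "kron P 0 = 0"
  by (simp add: vec_eq_iff kron_def)

lemma trace_kron: "trace (kron (P::real^'n::finite^'n) (Q::real^'d::finite^'d)) = trace P * trace Q"
  by (simp add: trace_def kron_def sum_UNIV_pair sum_product)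

lemma trace_Jmat: "trace (Jmat :: real^'n::finite^'n) = real CARD('n)"
  by (simp add: trace_def Jmat_def)

lemma Jmat_mult_Jmat: "(Jmat :: real^'n::finite^'n) ** Jmat = real CARD('n) *\<^sub>R Jmat"
  by (simp add: vec_eq_iff matrix_matrix_mult_def Jmat_def)

lemma inner_kron_Jmat:
  fixes A :: "real^'d::finite^'d" and v :: "real^('n::finite \<times> 'd)"
  defines "y \<equiv> \<chi> r. \<Sum>i\<in>UNIV. v $ (i, r)"
  shows "v \<bullet> (kron (Jmat::real^'n^'n) A *v v) = y \<bullet> (A *v y)"
proof -
  have Kv: "(kron (Jmat::real^'n^'n) A *v v) $ p = (A *v y) $ snd p" for p
  proof -
    have "(kron (Jmat::real^'n^'n) A *v v) $ p = (\<Sum>j\<in>UNIV. \<Sum>s\<in>UNIV. A $ snd p $ s * v $ (j, s))"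
      by (simp add: matrix_vector_mult_def kron_def Jmat_def sum_UNIV_pair)
    also have "\<dots> = (\<Sum>s\<in>UNIV. \<Sum>j\<in>UNIV. A $ snd p $ s * v $ (j, s))" by (rule sum.swap)
    finally show ?thesis by (simp add: matrix_vector_mult_def y_def sum_distrib_left)
  qed
  have "v \<bullet> (kron (Jmat::real^'n^'n) A *v v) = (\<Sum>i\<in>UNIV. \<Sum>r\<in>UNIV. v $ (i, r) * (A *v y) $ r)"
    by (simp add: inner_vec_def Kv sum_UNIV_pair)
  also have "\<dots> = (\<Sum>r\<in>UNIV. \<Sum>i\<in>UNIV. v $ (i, r) * (A *v y) $ r)" by (rule sum.swap)
  also have "\<dots> = y \<bullet> (A *v y)" by (simp add: inner_vec_def y_def sum_distrib_right)
  finally show ?thesis .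
qed

lemmas kron_Jmat_algebra = matrix_add_ldistrib matrix_add_rdistrib matrix_diff_ldistrib
  matrix_diff_rdistrib matrix_scalar_ac scalar_matrix_assoc[symmetric] kron_mult Jmat_mult_Jmat
  kron_add_right kron_diff_right kron_scaleR_right kron_scaleR_left matrix_mul_assoc[symmetric]

lemma woodbury_kron_Jmat:
  fixes A B :: "real^'d::finite^'d" and s2 :: real
  assumes s2: "s2 > 0" and invW: "invertible (mat 1 + (real CARD('n::finite) / s2) *\<^sub>R A)"
  defines "Z \<equiv> matrix_inv (mat 1 + (real CARD('n) / s2) *\<^sub>R A)"
    and "Ci \<equiv> matrix_inv (s2 *\<^sub>R mat 1 + kron (Jmat :: real^'n^'n) A)"
  shows "Ci ** kron Jmat B = kron Jmat (inverse s2 *\<^sub>R (Z ** B))"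
    and "Ci ** kron Jmat B ** Ci = inverse (s2^2) *\<^sub>R kron (Jmat :: real^'n^'n) (Z ** B ** Z)"
proof -
  let ?N = "real CARD('n)" and ?J = "Jmat :: real^'n^'n"
  define G where "G = inverse s2 *\<^sub>R mat 1 - kron ?J (inverse (s2^2) *\<^sub>R (Z ** A))"
  have s2nz: "s2 \<noteq> 0" and sq: "s2 * inverse (s2^2) = inverse s2"
    using s2 by (simp_all add: power2_eq_square)
  have ZA: "Z + (?N / s2) *\<^sub>R (Z ** A) = mat 1" and AZ: "Z + (?N / s2) *\<^sub>R (A ** Z) = mat 1"
    using matrix_inv_matrix_mul[OF invW] matrix_mul_matrix_inv[OF invW]
    unfolding Z_def by (simp_all add: kron_Jmat_algebra)
  have "A = (Z + (?N / s2) *\<^sub>R (A ** Z)) ** A" using AZ by simp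
  then have AZA: "A = Z ** A + (?N / s2) *\<^sub>R (A ** (Z ** A))" by (simp add: kron_Jmat_algebra)
  have "(s2 *\<^sub>R mat 1 + kron ?J A) ** G = mat 1 + kron ?J (inverse s2 *\<^sub>R A - inverse s2 *\<^sub>R (Z ** A)
      - (?N * inverse (s2^2)) *\<^sub>R (A ** (Z ** A)))"
    unfolding G_def using s2nz by (simp add: kron_Jmat_algebra sq algebra_simps)
  also have "inverse s2 *\<^sub>R A - inverse s2 *\<^sub>R (Z ** A) - (?N * inverse (s2^2)) *\<^sub>R (A ** (Z ** A)) = 0"
    by (subst (1) AZA) (simp add: algebra_simps power2_eq_square divide_inverse)
  finally have Ci: "Ci = G" unfolding Ci_def by (intro matrix_inv_unique) (simp add: kron_zero_right)
  have ZB: "Z ** B = B - (?N / s2) *\<^sub>R (Z ** (A ** B))"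
    using arg_cong[OF ZA, of "\<lambda>M. M ** B"] by (simp add: kron_Jmat_algebra algebra_simps)
  show CiB: "Ci ** kron ?J B = kron ?J (inverse s2 *\<^sub>R (Z ** B))"
    unfolding Ci G_def ZB using s2nz
    by (simp add: kron_Jmat_algebra sq algebra_simps power2_eq_square divide_inverse)
  have ZBZ: "Z ** (B ** Z) = Z ** B - (?N / s2) *\<^sub>R (Z ** (B ** (Z ** A)))"
    using arg_cong[OF ZA, of "\<lambda>M. Z ** B ** M"] by (simp add: kron_Jmat_algebra algebra_simps)
  show "Ci ** kron ?J B ** Ci = inverse (s2^2) *\<^sub>R kron ?J (Z ** B ** Z)"
    unfolding CiB unfolding Ci G_def using s2nz
    by (simp add: kron_Jmat_algebra ZBZ algebra_simps power2_eq_square divide_inverse)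
qed

section \<open>Derivatives of the determinant and of the inverse\<close>

definition det_deriv :: "real^'k::finite^'k \<Rightarrow> real^'k^'k \<Rightarrow> real" where
  "det_deriv M M' = (\<Sum>p\<in>{p. p permutes (UNIV::'k set)}. of_int (sign p) *
      (\<Sum>i\<in>UNIV. M' $ i $ p i * (\<Prod>j\<in>UNIV - {i}. M $ j $ p j)))"

lemma has_real_derivative_det:
  fixes M :: "real \<Rightarrow> real^'k::finite^'k"
  assumes "\<And>i j. ((\<lambda>x. M x $ i $ j) has_real_derivative M' $ i $ j) (at x)"
  shows "((\<lambda>x. det (M x)) has_real_derivative det_deriv (M x) M') (at x)"
  unfolding det_def det_deriv_def
  by (intro DERIV_sum DERIV_cmult has_field_derivative_prod assms)

lemma det_deriv_row_replace:
  fixes M M' :: "real^'k::finite^'k"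
  shows "det_deriv M M' = (\<Sum>i\<in>UNIV. det ((\<chi> k. if k = i then row i M' else row k M) :: real^'k^'k))"
proof -
  have "det_deriv M M' = (\<Sum>i\<in>UNIV. \<Sum>p\<in>{p. p permutes (UNIV::'k set)}. of_int (sign p) *
      (M' $ i $ p i * (\<Prod>j\<in>UNIV - {i}. M $ j $ p j)))"
    unfolding det_deriv_def by (subst sum.swap) (simp add: sum_distrib_left)
  also have "\<dots> = (\<Sum>i\<in>UNIV. det ((\<chi> k. if k = i then row i M' else row k M) :: real^'k^'k))"
    unfolding det_def
  proof (intro sum.cong refl)
    fix i :: 'k and p
    have "(\<Prod>k\<in>UNIV. (\<chi> k. if k = i then row i M' else row k M) $ k $ p k) =
        M' $ i $ p i * (\<Prod>j\<in>UNIV - {i}. M $ j $ p j)"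
      by (subst prod.remove[of UNIV i]) (auto simp: row_def intro!: prod.cong)
    then show "of_int (sign p) * (M' $ i $ p i * (\<Prod>j\<in>UNIV - {i}. M $ j $ p j)) =
        of_int (sign p) * (\<Prod>k\<in>UNIV. (\<chi> k. if k = i then row i M' else row k M) $ k $ p k)"
      by simp
  qed
  finally show ?thesis .
qed

lemma det_row_replace_matrix_mult:
  fixes N F :: "real^'k::finite^'k"
  shows "det ((\<chi> k. if k = i then row i (F ** N) else row k N) :: real^'k^'k) = F $ i $ i * det N"
proof -
  let ?A = "(\<chi> k. if k = i then F $ i $ i *s row i N else row k N) :: real^'k^'k"
  let ?x = "\<Sum>k\<in>UNIV-{i}. F $ i $ k *s row k N"
  have rA: "row j ?A = row j N" if "j \<noteq> i" for j using that by (simp add: row_def)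
  have x: "?x \<in> vec.span {row j ?A |j. j \<noteq> i}"
  proof (rule vec.span_sum)
    fix k assume "k \<in> UNIV - {i}"
    then have "row k N \<in> {row j ?A |j. j \<noteq> i}" using rA[of k] by force
    then show "F $ i $ k *s row k N \<in> vec.span {row j ?A |j. j \<noteq> i}"
      by (intro vec.span_scale vec.span_base)
  qed
  have "row i (F ** N) = (\<Sum>k\<in>UNIV. F $ i $ k *s row k N)"
    by (simp add: row_def matrix_matrix_mult_def vec_eq_iff sum_component)
  then have rowi: "row i (F ** N) = row i ?A + ?x"
    by (simp add: sum.remove[of UNIV i] row_def vec_eq_iff)
  have "det ((\<chi> k. if k = i then row i (F ** N) else row k N) :: real^'k^'k)
      = det ((\<chi> k. if k = i then row i ?A + ?x else row k ?A) :: real^'k^'k)"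
    by (rule arg_cong[where f=det]) (simp add: vec_eq_iff rowi rA)
  also have "\<dots> = det ?A" by (rule det_row_span[OF x])
  also have "\<dots> = F $ i $ i * det ((\<chi> k. if k = i then row i N else row k N) :: real^'k^'k)"
    by (rule det_row_mul)
  also have "((\<chi> k. if k = i then row i N else row k N) :: real^'k^'k) = N"
    by (simp add: vec_eq_iff row_def)
  finally show ?thesis .
qed

lemma jacobi_formula:
  fixes N N' :: "real^'k::finite^'k"
  assumes "invertible N"
  shows "det_deriv N N' = det N * trace (matrix_inv N ** N')"
proof -
  let ?F = "N' ** matrix_inv N"
  have NF: "N' = ?F ** N"
    by (simp add: matrix_mul_assoc[symmetric] matrix_inv_matrix_mul[OF assms])
  have "det_deriv N N' = (\<Sum>i\<in>UNIV. ?F $ i $ i * det N)"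
    unfolding det_deriv_row_replace by (subst NF, subst det_row_replace_matrix_mult, simp)
  also have "\<dots> = det N * trace ?F" by (simp add: trace_def sum_distrib_left mult.commute)
  also have "trace ?F = trace (matrix_inv N ** N')" by (rule trace_mul_sym)
  finally show ?thesis .
qed

lemma matrix_inv_entry_cramer:
  fixes A :: "real^'k::finite^'k"
  assumes "invertible A"
  shows "matrix_inv A $ k $ j =
    det ((\<chi> a b. if b = k then (if a = j then 1 else 0) else A $ a $ b) :: real^'k^'k) / det A"
proof -
  let ?b = "(\<chi> a. if a = j then 1 else 0) :: real^'k"
  have "det A \<noteq> 0" using assms invertible_det_nz by blast
  moreover have "A *v (matrix_inv A *v ?b) = ?b"
    by (simp add: matrix_vector_mul_assoc matrix_mul_matrix_inv[OF assms])
  ultimately have "matrix_inv A *v ?b = (\<chi> k. det (\<chi> i jj. if jj = k then ?b $ i else A $ i $ jj) / det A)"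
    using cramer by blast
  moreover have "(matrix_inv A *v ?b) $ k = matrix_inv A $ k $ j"
    by (simp add: matrix_vector_mult_def if_distrib cong: if_cong)
  moreover have "(\<chi> i jj. if jj = k then ?b $ i else A $ i $ jj) =
      ((\<chi> a b. if b = k then (if a = j then 1 else 0) else A $ a $ b) :: real^'k^'k)"
    by (simp add: vec_eq_iff)
  ultimately show ?thesis by simp
qed

lemma matrix_inv_entries_differentiable:
  fixes M :: "real \<Rightarrow> real^'k::finite^'k"
  assumes der: "\<And>i j. ((\<lambda>x. M x $ i $ j) has_real_derivative M' $ i $ j) (at x)"
    and inv: "\<And>y. invertible (M y)"
  shows "\<exists>D. \<forall>k j. ((\<lambda>y. matrix_inv (M y) $ k $ j) has_real_derivative D $ k $ j) (at x)"
proof -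
  define Q where "Q = (\<lambda>k j y. (\<chi> a b. if b = k then (if a = j then 1 else 0) else M y $ a $ b) :: real^'k^'k)"
  define Q' where "Q' = (\<lambda>k. (\<chi> a b. if b = k then 0 else M' $ a $ b) :: real^'k^'k)"
  define D where "D = (\<chi> k j. (det_deriv (Q k j x) (Q' k) * det (M x) - det (Q k j x) * det_deriv (M x) M')
      / (det (M x) * det (M x)))"
  have "((\<lambda>y. matrix_inv (M y) $ k $ j) has_real_derivative D $ k $ j) (at x)" for k j
  proof -
    have q: "((\<lambda>y. Q k j y $ a $ b) has_real_derivative Q' k $ a $ b) (at x)" for a b
      unfolding Q_def Q'_def by (auto intro: der)
    have "(\<lambda>y. matrix_inv (M y) $ k $ j) = (\<lambda>y. det (Q k j y) / det (M y))"
      using matrix_inv_entry_cramer[OF inv] unfolding Q_def by auto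
    then show ?thesis
      using DERIV_divide[OF has_real_derivative_det[OF q] has_real_derivative_det[OF der]]
        inv invertible_det_nz unfolding D_def by auto
  qed
  then show ?thesis by blast
qed

lemma has_real_derivative_matrix_inv:
  fixes M :: "real \<Rightarrow> real^'k::finite^'k"
  assumes der: "\<And>i j. ((\<lambda>x. M x $ i $ j) has_real_derivative M' $ i $ j) (at x)"
    and inv: "\<And>y. invertible (M y)"
  shows "((\<lambda>y. matrix_inv (M y) $ i $ j) has_real_derivative
           (- (matrix_inv (M x) ** M' ** matrix_inv (M x))) $ i $ j) (at x)"
proof -
  let ?Mi = "\<lambda>y. matrix_inv (M y)"
  obtain D where D: "\<And>k j. ((\<lambda>y. ?Mi y $ k $ j) has_real_derivative D $ k $ j) (at x)"
    using matrix_inv_entries_differentiable[OF der inv] by blast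
  have "(M' ** ?Mi x + M x ** D) $ a $ b = 0" for a b
  proof -
    have "((\<lambda>y. (M y ** ?Mi y) $ a $ b) has_real_derivative (M' ** ?Mi x + M x ** D) $ a $ b) (at x)"
      unfolding matrix_matrix_mult_def
      by (simp, rule DERIV_cong[OF DERIV_sum], rule DERIV_mult[OF der D],
          simp add: sum.distrib algebra_simps)
    moreover have "(\<lambda>y. (M y ** ?Mi y) $ a $ b) = (\<lambda>y. mat 1 $ a $ b)"
      using matrix_mul_matrix_inv[OF inv] by simp
    ultimately have "((\<lambda>y. mat 1 $ a $ b) has_real_derivative (M' ** ?Mi x + M x ** D) $ a $ b) (at x)"
      by simp
    then show ?thesis using DERIV_const DERIV_unique by blast
  qed
  then have MD: "M x ** D = - (M' ** ?Mi x)" by (simp add: vec_eq_iff eq_neg_iff_add_eq_0 add.commute)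
  have "D = ?Mi x ** (M x ** D)"
    by (simp add: matrix_mul_assoc matrix_inv_matrix_mul[OF inv])
  also have "\<dots> = - (?Mi x ** M' ** ?Mi x)"
    unfolding MD by (simp add: matrix_mul_assoc matrix_mul_uminus_right)
  finally have "D = - (?Mi x ** M' ** ?Mi x)" .
  then show ?thesis using D by simp
qed

section \<open>Positive definite matrices\<close>

definition posdef :: "real^'k::finite^'k \<Rightarrow> bool" where
  "posdef P \<longleftrightarrow> (\<forall>v. v \<noteq> 0 \<longrightarrow> 0 < v \<bullet> (P *v v))"

lemma posdef_scaled_id_plus_psd:
  assumes "c > 0" and "\<And>v. 0 \<le> v \<bullet> (P *v v)"
  shows "posdef (c *\<^sub>R mat 1 + P)"
  unfolding posdef_def
  using assms by (auto simp: matrix_vector_mult_add_rdistrib inner_add_right scaleR_matrix_vector_mult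
      intro: add_pos_nonneg)

lemma posdef_invertible:
  assumes "posdef P"
  shows "invertible P"
proof -
  have "\<forall>x. P *v x = 0 \<longrightarrow> x = 0"
    using assms unfolding posdef_def by (metis inner_zero_right less_irrefl)
  then show ?thesis unfolding invertible_left_inverse matrix_left_invertible_ker[symmetric] .
qed

text \<open>The segment from the identity to P stays positive definite, hence nonsingular, so by the
  intermediate value theorem det cannot change sign along it.\<close>

lemma posdef_det_pos:
  assumes "posdef P"
  shows "det P > 0"
proof (rule ccontr)
  assume neg: "\<not> det P > 0"
  define M where "M = (\<lambda>s::real. (1 - s) *\<^sub>R mat 1 + s *\<^sub>R P)"
  have posdef_M: "posdef (M s)" if "0 \<le> s" "s \<le> 1" for s
    unfolding posdef_def
  proof (intro allI impI)
    fix v :: "real^'a" assume "v \<noteq> 0"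
    then have "0 < v \<bullet> v" "0 < v \<bullet> (P *v v)" using assms unfolding posdef_def by auto
    moreover have "v \<bullet> (M s *v v) = (1 - s) * (v \<bullet> v) + s * (v \<bullet> (P *v v))"
      unfolding M_def by (simp add: matrix_vector_mult_add_rdistrib inner_add_right scaleR_matrix_vector_mult)
    ultimately show "0 < v \<bullet> (M s *v v)"
      using that by (cases "s = 0") (auto intro: add_nonneg_pos)
  qed
  have "isCont (\<lambda>s. det (M s)) s" for s
  proof -
    have "((\<lambda>s. M s $ i $ j) has_real_derivative (P - mat 1) $ i $ j) (at s)" for i j
      unfolding M_def by (auto intro!: derivative_eq_intros simp: mat_def)
    then show ?thesis by (rule DERIV_isCont[OF has_real_derivative_det])
  qed
  moreover have "det (M 1) \<le> 0" "0 \<le> det (M 0)" using neg unfolding M_def by simp_all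
  ultimately obtain s where "0 \<le> s" "s \<le> 1" "det (M s) = 0"
    using IVT2[of "\<lambda>s. det (M s)" 1 0 0] by auto
  then show False using posdef_invertible[OF posdef_M] invertible_det_nz by blast
qed

lemma has_real_derivative_gaussian_log_likelihood:
  fixes C :: "real \<Rightarrow> real^'k::finite^'k"
  assumes der: "\<And>i j. ((\<lambda>x. C x $ i $ j) has_real_derivative C' $ i $ j) (at x)"
    and pd: "\<And>y. posdef (C y)"
  shows "((\<lambda>y. - (1/2) * (X \<bullet> (matrix_inv (C y) *v X)) - (1/2) * ln (det (C y)) - c)
    has_real_derivative (1/2) * (X \<bullet> ((matrix_inv (C x) ** C' ** matrix_inv (C x)) *v X))
      - (1/2) * trace (matrix_inv (C x) ** C')) (at x)"
proof -
  let ?Ci = "matrix_inv (C x)"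
  have inv: "invertible (C y)" for y using pd posdef_invertible by blast
  have "((\<lambda>y. matrix_inv (C y) $ p $ q * X $ q) has_real_derivative
      (- (?Ci ** C' ** ?Ci)) $ p $ q * X $ q) (at x)" for p q
    by (rule DERIV_cmult_right[OF has_real_derivative_matrix_inv[OF der inv]])
  then have quad: "((\<lambda>y. X \<bullet> (matrix_inv (C y) *v X)) has_real_derivative
      X \<bullet> ((- (?Ci ** C' ** ?Ci)) *v X)) (at x)"
    unfolding inner_vec_def matrix_vector_mult_def
    by (simp only: vec_lambda_beta inner_real_def, intro DERIV_sum DERIV_cmult)
  have "((\<lambda>y. ln (det (C y))) has_real_derivative 1 / det (C x) * det_deriv (C x) C') (at x)"
    by (rule DERIV_chain2[OF DERIV_ln_divide[OF posdef_det_pos[OF pd]] has_real_derivative_det[OF der]])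
  then have logdet: "((\<lambda>y. ln (det (C y))) has_real_derivative trace (?Ci ** C')) (at x)"
    using jacobi_formula[OF inv[of x], of C'] posdef_det_pos[OF pd, of x] by simp
  have "((\<lambda>y. - (1/2) * (X \<bullet> (matrix_inv (C y) *v X)) - (1/2) * ln (det (C y)) - c)
    has_real_derivative - (1/2) * (X \<bullet> ((- (?Ci ** C' ** ?Ci)) *v X)) - (1/2) * trace (?Ci ** C') - 0) (at x)"
    by (intro DERIV_diff DERIV_cmult quad logdet DERIV_const)
  then show ?thesis by (simp add: uminus_matrix_vector_mult)
qed

section \<open>The squared exponential covariance\<close>

lemma exp_kernel_psd:
  fixes w u :: "'k::finite \<Rightarrow> real"
  shows "0 \<le> (\<Sum>r\<in>UNIV. \<Sum>s\<in>UNIV. w r * w s * exp (u r * u s))"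
proof -
  have "(\<lambda>n. \<Sum>r\<in>UNIV. \<Sum>s\<in>UNIV. w r * w s * ((u r * u s) ^ n / fact n))
          sums (\<Sum>r\<in>UNIV. \<Sum>s\<in>UNIV. w r * w s * exp (u r * u s))"
  proof (intro sums_sum sums_mult)
    show "(\<lambda>n. (u r * u s) ^ n / fact n) sums exp (u r * u s)" for r s
      using exp_converges[of "u r * u s"] by (simp add: divide_inverse mult.commute)
  qed
  moreover have "(\<Sum>r\<in>UNIV. \<Sum>s\<in>UNIV. w r * w s * ((u r * u s) ^ n / fact n)) =
      (\<Sum>r\<in>UNIV. w r * u r ^ n)^2 / fact n" for n
    by (simp add: power2_eq_square sum_product sum_divide_distrib power_mult_distrib mult_ac)
  ultimately have "(\<lambda>n. (\<Sum>r\<in>UNIV. w r * u r ^ n)^2 / fact n)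
          sums (\<Sum>r\<in>UNIV. \<Sum>s\<in>UNIV. w r * w s * exp (u r * u s))" by simp
  then show ?thesis by (rule sums_le[OF _ sums_zero, rotated]) simp
qed

lemma Amat_psd:
  fixes t :: "'d::finite \<Rightarrow> real"
  shows "0 \<le> y \<bullet> (Amat t th1 th2 *v y)"
proof -
  define l where "l = ell th1"
  have l: "l > 0" unfolding l_def ell_def by simp
  define u where "u = (\<lambda>r. sqrt (2 / l) * t r)"
  define w where "w = (\<lambda>r. y $ r * exp (- ((t r)^2 / l)))"
  have e: "exp (- ((t r - t s)^2 / l)) = exp (- ((t r)^2 / l)) * exp (- ((t s)^2 / l)) * exp (u r * u s)" for r s
  proof -
    have "u r * u s = 2 * t r * t s / l" unfolding u_def using l by (simp add: mult_ac)
    then show ?thesis using l by (simp add: exp_add[symmetric] power2_eq_square field_simps)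
  qed
  have "y \<bullet> (Amat t th1 th2 *v y) = asq th2 * (\<Sum>r\<in>UNIV. \<Sum>s\<in>UNIV. w r * w s * exp (u r * u s))"
    unfolding Amat_def inner_vec_def matrix_vector_mult_def w_def l_def[symmetric]
    by (simp add: e sum_distrib_left mult_ac)
  also have "\<dots> \<ge> 0" using exp_kernel_psd[of w u] by (simp add: asq_def)
  finally show ?thesis .
qed

lemma posdef_Chat: "posdef (Chat t th1 th2 th3 :: real^('n::finite \<times> 'd::finite)^('n \<times> 'd))"
  unfolding Chat_def
  by (rule posdef_scaled_id_plus_psd) (simp_all add: sigsq_def inner_kron_Jmat Amat_psd)

lemma invertible_id_plus_scaled_Amat:
  "invertible (mat 1 + (real n / sigsq th3) *\<^sub>R Amat t th1 th2)"
proof -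
  have "0 \<le> v \<bullet> (((real n / sigsq th3) *\<^sub>R Amat t th1 th2) *v v)" for v
    by (simp add: scaleR_matrix_vector_mult Amat_psd sigsq_def)
  then show ?thesis
    using posdef_invertible posdef_scaled_id_plus_psd[of 1] by (metis scale_one zero_less_one)
qed

lemma has_real_derivative_Chat_entry:
  "((\<lambda>x. (Chat t x th2 th3 :: real^('n::finite \<times> 'd::finite)^('n \<times> 'd)) $ p $ q) has_real_derivative
     kron (Jmat::real^'n^'n) (hadamard (Amat t x0 th2) (Smat t x0)) $ p $ q) (at x0)"
proof -
  have "(\<lambda>x. (Chat t x th2 th3 :: real^('n \<times> 'd)^('n \<times> 'd)) $ p $ q) =
     (\<lambda>x. sigsq th3 * mat 1 $ p $ q + asq th2 * exp (- ((t (snd p) - t (snd q))^2 / exp x)))"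
    by (simp add: Chat_def kron_def Jmat_def Amat_def ell_def)
  then show ?thesis
    by (auto intro!: derivative_eq_intros simp: kron_def Jmat_def hadamard_def Amat_def Smat_def ell_def
        field_simps power2_eq_square)
qed

lemma dChat_eq:
  "(dChat t th1 th2 th3 :: real^('n::finite \<times> 'd::finite)^('n \<times> 'd)) =
    kron (Jmat::real^'n^'n) (hadamard (Amat t th1 th2) (Smat t th1))"
proof (intro vec_eq_iff[THEN iffD2] allI)
  fix p q :: "'n \<times> 'd"
  show "dChat t th1 th2 th3 $ p $ q = kron (Jmat::real^'n^'n) (hadamard (Amat t th1 th2) (Smat t th1)) $ p $ q"
    unfolding dChat_def using DERIV_imp_deriv[OF has_real_derivative_Chat_entry] by simp
qed

lemma hadamard_Amat_Smat_symmetric: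
  "hadamard (Amat t th1 th2) (Smat t th1) $ i $ j = hadamard (Amat t th1 th2) (Smat t th1) $ j $ i"
  by (simp add: hadamard_def Amat_def Smat_def power2_commute)

theorem proposition1:
  fixes t :: "'d::finite \<Rightarrow> real"
    and X :: "real^('n::finite \<times> 'd)"
    and th1 th2 th3 :: real
  assumes equally_spaced: "\<exists>idx c h. bij_betw idx (UNIV :: 'd set) {..<CARD('d)} \<and>
                              (\<forall>r. t r = c + h * real (idx r))"
  defines "A \<equiv> Amat t th1 th2"
      and "S \<equiv> Smat t th1"
      and "Z \<equiv> Zmat CARD('n) t th1 th2 th3"
      and "C \<equiv> (Chat t th1 th2 th3 :: real^('n \<times> 'd)^('n \<times> 'd))"
      and "dC \<equiv> (dChat t th1 th2 th3 :: real^('n \<times> 'd)^('n \<times> 'd))"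
      and "s2 \<equiv> sigsq th3"
  shows "((\<lambda>x. logp X t x th2 th3) has_real_derivative
            (1/2) * (X \<bullet> ((inverse (s2^2) *\<^sub>R kron (Jmat :: real^'n^'n) (Z ** hadamard A S ** Z)) *v X))
            - (1/2) * trace (matrix_inv C ** dC)) (at th1)
       \<and> trace (matrix_inv C ** dC) =
            inverse s2 * real CARD('n) * (\<Sum>i\<in>UNIV. hadamard A S $ i $ i)
            - inverse s2 * real CARD('n) * (\<Sum>i\<in>UNIV. \<Sum>j\<in>UNIV. hadamard (mat 1 - Z) (hadamard A S) $ i $ j)"
proof -
  have s2: "s2 > 0" unfolding s2_def sigsq_def by simp
  have C_eq: "C = s2 *\<^sub>R mat 1 + kron Jmat A" and dC_eq: "dC = kron Jmat (hadamard A S)"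
    unfolding C_def Chat_def A_def s2_def dC_def dChat_eq S_def by simp_all
  have Z_eq: "Z = matrix_inv (mat 1 + (real CARD('n) / s2) *\<^sub>R A)"
    unfolding Z_def Zmat_def A_def s2_def ..
  have invW: "invertible (mat 1 + (real CARD('n) / s2) *\<^sub>R A)"
    unfolding A_def s2_def by (rule invertible_id_plus_scaled_Amat)
  have deriv: "((\<lambda>x. logp X t x th2 th3) has_real_derivative
      (1/2) * (X \<bullet> ((matrix_inv C ** dC ** matrix_inv C) *v X)) - (1/2) * trace (matrix_inv C ** dC)) (at th1)"
    unfolding logp_def C_def dC_def
    by (intro has_real_derivative_gaussian_log_likelihood posdef_Chat)
      (simp add: dChat_eq has_real_derivative_Chat_entry)
  have quadratic: "matrix_inv C ** dC ** matrix_inv C = inverse (s2^2) *\<^sub>R kron Jmat (Z ** hadamard A S ** Z)"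
    unfolding C_eq dC_eq Z_eq by (rule woodbury_kron_Jmat(2)[OF s2 invW])
  have "trace (matrix_inv C ** dC) = real CARD('n) * (inverse s2 * trace (Z ** hadamard A S))"
    unfolding C_eq dC_eq Z_eq woodbury_kron_Jmat(1)[OF s2 invW] trace_kron trace_Jmat
    by (simp add: trace_def sum_distrib_left)
  also have "\<dots> = inverse s2 * real CARD('n) * (\<Sum>i\<in>UNIV. hadamard A S $ i $ i)
      - inverse s2 * real CARD('n) * (\<Sum>i\<in>UNIV. \<Sum>j\<in>UNIV. hadamard (mat 1 - Z) (hadamard A S) $ i $ j)"
    unfolding trace_mult_symmetric[OF hadamard_Amat_Smat_symmetric[of t th1 th2, folded A_def S_def]]
    by (simp add: algebra_simps)
  finally show ?thesis using deriv unfolding quadratic by blast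
qed

end
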